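(* Let $G$ be a finite group with $s$ conjugacy classes, let $r\ge 2$ be a prime, and suppose exactly $d$ of the conjugacy classes of $G$ are not $r$-th powers, labeled so that $\mathcal{C}_1,\dots,\mathcal{C}_d$ are those not consisting of $r$-th powers and $\mathcal{C}_{d+1},\dots,\mathcal{C}_s$ are the rest. Let $g\in G\wr S_n$ have type $T(g)=(T(g)_{ij})_{s\times n}$. Then $g$ is an $r$-th power in $G\wr S_n$ if and only if $r\mid T(g)_{ij}$ whenever $r\mid j$ or $1\le i\le d$.
   Context: $G\wr S_n$ is the set of pairs $(f,\pi)$ with $f:\{1,\dots,n\}\to G$ and $\pi\in S_n$, with product $(f,\pi)(f',\pi')=(ff'_\pi,\pi\pi')$, $f'_\pi(i)=f'(\pi^{-1}(i))$, pointwise product of functions. For $(f,\pi)$ and a cycle $(j,\pi(j),\dots,\pi^t(j))$ of $\pi$, its cycle product is $f(j)f(\pi^{-1}(j))\cdots f(\pi^{-t}(j))$; its conjugacy class is independent of the starting point. The type $T(g)$ of $g=(f,\pi)$ is the $s\times n$ matrix whose $(i,k)$ entry is the number of $k$-cycles of $\pi$ whose cycle product lies in $\mathcal{C}_i$. A conjugacy class $\mathcal{C}$ of $G$ is an $r$-th power if $\mathcal{C}\subseteq\{x^r:x\in G\}$; an element $g$ of $G\wr S_n$ is an $r$-th power if $g=h^r$ for some $h\in G\wr S_n$. *)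

theory Defs
  imports "HOL-Algebra.Group" "HOL-Combinatorics.Permutations" "HOL-Computational_Algebra.Primes"
begin

definition conj_class :: "('a, 'b) monoid_scheme \<Rightarrow> 'a \<Rightarrow> 'a set" where
  "conj_class G x = {inv\<^bsub>G\<^esub> y \<otimes>\<^bsub>G\<^esub> x \<otimes>\<^bsub>G\<^esub> y | y. y \<in> carrier G}"

definition conj_classes :: "('a, 'b) monoid_scheme \<Rightarrow> 'a set set" where
  "conj_classes G = conj_class G ` carrier G"

definition class_is_rth_power :: "('a, 'b) monoid_scheme \<Rightarrow> nat \<Rightarrow> 'a set \<Rightarrow> bool" where
  "class_is_rth_power G r C \<longleftrightarrow> C \<subseteq> {x [^]\<^bsub>G\<^esub> r | x. x \<in> carrier G}"

text \<open>Wreath product G wr S_n: pairs (f, pi) with f : {1..n} -> G (extended by 1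
  outside {1..n}) and pi a permutation of {1..n} (identity outside).\<close>
definition wr_carrier :: "('a, 'b) monoid_scheme \<Rightarrow> nat \<Rightarrow> ((nat \<Rightarrow> 'a) \<times> (nat \<Rightarrow> nat)) set" where
  "wr_carrier G n = {(f, p). p permutes {1..n} \<and> (\<forall>i\<in>{1..n}. f i \<in> carrier G)
                        \<and> (\<forall>i. i \<notin> {1..n} \<longrightarrow> f i = \<one>\<^bsub>G\<^esub>)}"

definition wr_mult :: "('a, 'b) monoid_scheme \<Rightarrow> ((nat \<Rightarrow> 'a) \<times> (nat \<Rightarrow> nat))
    \<Rightarrow> ((nat \<Rightarrow> 'a) \<times> (nat \<Rightarrow> nat)) \<Rightarrow> ((nat \<Rightarrow> 'a) \<times> (nat \<Rightarrow> nat))" where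
  "wr_mult G x y = (\<lambda>i. fst x i \<otimes>\<^bsub>G\<^esub> fst y (inv_into UNIV (snd x) i), snd x \<circ> snd y)"

definition wr_one :: "('a, 'b) monoid_scheme \<Rightarrow> ((nat \<Rightarrow> 'a) \<times> (nat \<Rightarrow> nat))" where
  "wr_one G = (\<lambda>_. \<one>\<^bsub>G\<^esub>, id)"

fun wr_pow :: "('a, 'b) monoid_scheme \<Rightarrow> ((nat \<Rightarrow> 'a) \<times> (nat \<Rightarrow> nat)) \<Rightarrow> nat
    \<Rightarrow> ((nat \<Rightarrow> 'a) \<times> (nat \<Rightarrow> nat))" where
  "wr_pow G x 0 = wr_one G"
| "wr_pow G x (Suc m) = wr_mult G (wr_pow G x m) x"

definition wr_is_rth_power :: "('a, 'b) monoid_scheme \<Rightarrow> nat \<Rightarrow> nat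
    \<Rightarrow> ((nat \<Rightarrow> 'a) \<times> (nat \<Rightarrow> nat)) \<Rightarrow> bool" where
  "wr_is_rth_power G n r g \<longleftrightarrow> (\<exists>h \<in> wr_carrier G n. wr_pow G h r = g)"

fun cycle_prod :: "('a, 'b) monoid_scheme \<Rightarrow> (nat \<Rightarrow> 'a) \<Rightarrow> (nat \<Rightarrow> nat) \<Rightarrow> nat \<Rightarrow> nat \<Rightarrow> 'a" where
  "cycle_prod G f p j 0 = \<one>\<^bsub>G\<^esub>"
| "cycle_prod G f p j (Suc m) = cycle_prod G f p j m \<otimes>\<^bsub>G\<^esub> f ((inv_into UNIV p ^^ m) j)"

definition cycle_of :: "(nat \<Rightarrow> nat) \<Rightarrow> nat \<Rightarrow> nat set" where
  "cycle_of p j = {(p ^^ m) j | m. True}"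

text \<open>Type entry T(g)_{C,k}: number of k-cycles of pi whose cycle product lies in C.\<close>
definition wr_type :: "('a, 'b) monoid_scheme \<Rightarrow> nat \<Rightarrow> ((nat \<Rightarrow> 'a) \<times> (nat \<Rightarrow> nat))
    \<Rightarrow> 'a set \<Rightarrow> nat \<Rightarrow> nat" where
  "wr_type G n g C k = card {Z. \<exists>j\<in>{1..n}. Z = cycle_of (snd g) j \<and> card Z = k
                              \<and> cycle_prod G (fst g) (snd g) j k \<in> C}"

end

theory Submission
  imports Defs "HOL-Combinatorics.Cycles" "HOL-Combinatorics.Orbits"
begin

lemma bij_betw_funpow_orbit:
  assumes "permutation p"
  shows "bij_betw (\<lambda>t. (p ^^ t) x) {..<least_power p x} (orbit p x)"
proof -
  have "distinct (support p x)"
    using cycle_of_permutation[OF assms] .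
  then have "inj_on (\<lambda>t. (p ^^ t) x) {..<least_power p x}"
    by (simp add: distinct_map atLeast_upt)
  moreover have "orbit p x = (\<lambda>t. (p ^^ t) x) ` {..<least_power p x}"
    using support_set[OF assms, of x] orbit_altdef_permutation[OF assms, of x]
    by (auto simp: atLeast_upt)
  ultimately show ?thesis
    by (simp add: bij_betw_def)
qed

lemma card_orbit_eq_least_power:
  assumes "permutation p"
  shows "card (orbit p x) = least_power p x"
  using bij_betw_same_card[OF bij_betw_funpow_orbit[OF assms]] by simp

lemma orbit_disjoint:
  assumes "permutation p" "orbit p x \<inter> orbit p y \<noteq> {}"
  shows "orbit p x = orbit p y"
  using assms orbit_cyclic_eq3[OF cyclic_on_orbit'[OF assms(1)]] by blast

lemma prime_dvd_card_if_fixpoint_free: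
  fixes \<tau> :: "'a \<Rightarrow> 'a"
  assumes "finite S" "prime r"
    and maps_to: "\<And>x. x \<in> S \<Longrightarrow> \<tau> x \<in> S"
    and period: "\<And>x. x \<in> S \<Longrightarrow> (\<tau> ^^ r) x = x"
    and no_fix: "\<And>x. x \<in> S \<Longrightarrow> \<tau> x \<noteq> x"
  shows "r dvd card S"
proof -
  have in_S: "(\<tau> ^^ m) x \<in> S" if "x \<in> S" for m x
    using that by (induction m) (auto simp: maps_to)
  have "S \<subseteq> \<tau> ` S"
  proof
    fix x assume x: "x \<in> S"
    have "x = \<tau> ((\<tau> ^^ (r - 1)) x)"
      using period[OF x] prime_gt_0_nat[OF \<open>prime r\<close>]
      by (metis Suc_diff_1 comp_apply funpow.simps(2))
    then show "x \<in> \<tau> ` S"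
      using in_S[OF x] by blast
  qed
  then have onto: "\<tau> ` S = S"
    using maps_to by blast
  define \<sigma> where "\<sigma> = perm_restrict \<tau> S"
  have "bij_betw \<tau> S S"
    using onto eq_card_imp_inj_on[OF \<open>finite S\<close>, of \<tau>] by (simp add: bij_betw_def)
  then have "bij_betw \<sigma> S S"
    by (rule bij_betw_cong[THEN iffD1, rotated]) (simp add: \<sigma>_def perm_restrict_def)
  then have "\<sigma> permutes S"
    by (rule bij_imp_permutes) (simp add: \<sigma>_def perm_restrict_def)
  then have perm: "permutation \<sigma>"
    using \<open>finite S\<close> permutation_permutes by blast
  have \<sigma>_pow: "(\<sigma> ^^ m) x = (\<tau> ^^ m) x" if "x \<in> S" for m x
    using that by (induction m) (auto simp: \<sigma>_def perm_restrict_def in_S)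
  have card_orbit: "card (orbit \<sigma> x) = r" if x: "x \<in> S" for x
  proof -
    have "least_power \<sigma> x dvd r"
      using least_power_dvd[OF perm] \<sigma>_pow[OF x] period[OF x] by simp
    moreover have "least_power \<sigma> x \<noteq> 1"
      using least_power_of_permutation(1)[OF perm, of x] \<sigma>_pow[OF x, of 1] no_fix[OF x] by auto
    ultimately show ?thesis
      using \<open>prime r\<close> card_orbit_eq_least_power[OF perm] by (auto simp: prime_nat_iff)
  qed
  have "\<Union> (orbit \<sigma> ` S) = S"
    using permutes_orbit_subset[OF \<open>\<sigma> permutes S\<close>] permutation_self_in_orbit[OF perm] by blast
  moreover have "r dvd card (\<Union> (orbit \<sigma> ` S))"
    by (rule dvd_partition) (use \<open>finite S\<close> card_orbit orbit_disjoint[OF perm] calculation in auto)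
  ultimately show ?thesis
    by simp
qed

lemma cycle_of_eq_orbit:
  assumes "permutation p"
  shows "cycle_of p j = orbit p j"
  using orbit_altdef_permutation[OF assms] unfolding cycle_of_def by simp

lemma cycle_of_inv:
  assumes "permutation p"
  shows "cycle_of (inv_into UNIV p) j = cycle_of p j"
  using assms by (simp add: cycle_of_eq_orbit permutation_inverse orbit_inv_eq)

lemma card_cycle_of:
  assumes "permutation p"
  shows "card (cycle_of p j) = least_power p j"
  using assms by (simp add: cycle_of_eq_orbit card_orbit_eq_least_power)

lemma bij_betw_funpow_cycle_of:
  assumes "permutation p"
  shows "bij_betw (\<lambda>t. (p ^^ t) j) {..<card (cycle_of p j)} (cycle_of p j)"
  using bij_betw_funpow_orbit[OF assms] by (simp add: assms cycle_of_eq_orbit card_orbit_eq_least_power)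

lemma card_cycle_of_pos:
  assumes "permutation p"
  shows "0 < card (cycle_of p j)"
  using least_power_of_permutation(2)[OF assms] by (simp add: assms card_cycle_of)

lemma finite_cycle_of:
  assumes "permutation p"
  shows "finite (cycle_of p j)"
  using card_cycle_of_pos[OF assms, of j] card.infinite by (metis less_irrefl)

lemma funpow_fixpoint_iff:
  assumes "permutation p"
  shows "(p ^^ m) j = j \<longleftrightarrow> card (cycle_of p j) dvd m"
  unfolding card_cycle_of[OF assms] least_power_dvd[OF assms] ..

lemma inv_funpow_fixpoint_iff:
  assumes "permutation p"
  shows "(inv_into UNIV p ^^ m) j = j \<longleftrightarrow> card (cycle_of p j) dvd m"
  using funpow_fixpoint_iff[OF permutation_inverse[OF assms]] by (simp add: assms cycle_of_inv)

lemma funpow_eq_iff_mod: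
  assumes "permutation p"
  shows "(p ^^ a) j = (p ^^ b) j \<longleftrightarrow> a mod card (cycle_of p j) = b mod card (cycle_of p j)"
proof -
  let ?k = "card (cycle_of p j)"
  have "(p ^^ ?k) j = j"
    using funpow_fixpoint_iff[OF assms] by simp
  then have "(p ^^ a) j = (p ^^ (a mod ?k)) j" "(p ^^ b) j = (p ^^ (b mod ?k)) j"
    using funpow_mod_eq by metis+
  moreover have "inj_on (\<lambda>t. (p ^^ t) j) {..<?k}"
    using bij_betw_funpow_cycle_of[OF assms] by (rule bij_betw_imp_inj_on)
  ultimately show ?thesis
    using card_cycle_of_pos[OF assms, of j] by (auto dest: inj_onD)
qed

lemma self_in_cycle_of: "j \<in> cycle_of p j"
  unfolding cycle_of_def by (auto intro: exI[of _ 0])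

lemma funpow_in_cycle_of:
  assumes "x \<in> cycle_of p j"
  shows "(p ^^ m) x \<in> cycle_of p j"
proof -
  obtain a where "x = (p ^^ a) j"
    using assms unfolding cycle_of_def by auto
  then have "(p ^^ m) x = (p ^^ (m + a)) j"
    by (simp add: funpow_add)
  then show ?thesis
    unfolding cycle_of_def by blast
qed

lemma cycle_of_eq:
  assumes "permutation p" "x \<in> cycle_of p j"
  shows "cycle_of p x = cycle_of p j"
  using orbit_cyclic_eq3[OF cyclic_on_orbit'[OF assms(1)], of x j] assms
  by (simp add: cycle_of_eq_orbit)

lemma inv_in_cycle_of:
  assumes "permutation p" "x \<in> cycle_of p j"
  shows "inv_into UNIV p x \<in> cycle_of p j"
  using funpow_in_cycle_of[of x "inv_into UNIV p" j 1] assms by (simp add: cycle_of_inv)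

lemma cycle_of_subset:
  assumes "\<And>i. i \<in> A \<Longrightarrow> p i \<in> A" "j \<in> A"
  shows "cycle_of p j \<subseteq> A"
proof -
  have "(p ^^ m) j \<in> A" for m
    using assms by (induction m) auto
  then show ?thesis
    unfolding cycle_of_def by auto
qed

lemma image_cycle_of_commute:
  assumes "q \<circ> p = p \<circ> q"
  shows "q ` cycle_of p j = cycle_of p (q j)"
proof -
  have "q ((p ^^ m) j) = (p ^^ m) (q j)" for m
  proof (induction m)
    case (Suc m)
    then show ?case
      using fun_cong[OF assms, of "(p ^^ m) j"] by simp
  qed simp
  then show ?thesis
    unfolding cycle_of_def by (auto simp: image_iff) metis
qed

lemma image_cycle_of_self:
  assumes "permutation p"
  shows "p ` cycle_of p j = cycle_of p j"
  using image_cycle_of_commute[of p p j] cycle_of_eq[OF assms funpow_in_cycle_of[OF self_in_cycle_of, where m=1]]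
  by simp

lemma wr_pow_eq:
  assumes "bij p"
  shows "wr_pow G (f, p) m = (\<lambda>i. cycle_prod G f p i m, p ^^ m)"
proof (induction m)
  case 0
  show ?case
    by (simp add: wr_one_def id_def)
next
  case (Suc m)
  have "inv_into UNIV (p ^^ m) = inv_into UNIV p ^^ m"
    using inv_fn[OF assms] .
  then show ?case
    using Suc by (simp only: wr_pow.simps wr_mult_def fst_conv snd_conv cycle_prod.simps
        funpow_Suc_right)
qed

lemma cycle_prod_cong:
  assumes "\<And>i. i \<in> B \<Longrightarrow> inv_into UNIV p i = inv_into UNIV p' i \<and> inv_into UNIV p i \<in> B"
    and "\<And>i. i \<in> B \<Longrightarrow> f i = f' i" and "j \<in> B"
  shows "cycle_prod G f p j m = cycle_prod G f' p' j m"
proof -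
  have walk: "(inv_into UNIV p ^^ t) j \<in> B \<and> (inv_into UNIV p ^^ t) j = (inv_into UNIV p' ^^ t) j" for t
  proof (induction t)
    case (Suc t)
    then show ?case
      using assms(1)[of "(inv_into UNIV p ^^ t) j"] by auto
  qed (simp add: assms(3))
  show ?thesis
  proof (induction m)
    case (Suc m)
    then show ?case
      using walk[of m] assms(2)[of "(inv_into UNIV p ^^ m) j"] by auto
  qed simp
qed

context group
begin

lemma inv_mult_cancel_left [simp]:
  "a \<in> carrier G \<Longrightarrow> z \<in> carrier G \<Longrightarrow> inv a \<otimes> (a \<otimes> z) = z"
  by (simp add: m_assoc[symmetric])

lemma mult_inv_cancel_left [simp]:
  "a \<in> carrier G \<Longrightarrow> z \<in> carrier G \<Longrightarrow> a \<otimes> (inv a \<otimes> z) = z"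
  by (simp add: m_assoc[symmetric])

lemma conj_class_self: "x \<in> carrier G \<Longrightarrow> x \<in> conj_class G x"
  unfolding conj_class_def by (auto intro!: exI[of _ \<one>])

lemma conj_classI: "c \<in> carrier G \<Longrightarrow> inv c \<otimes> x \<otimes> c \<in> conj_class G x"
  unfolding conj_class_def by blast

lemma conj_class_trans:
  assumes "x \<in> carrier G" "y \<in> conj_class G x" "z \<in> conj_class G y"
  shows "z \<in> conj_class G x"
proof -
  obtain c d where "c \<in> carrier G" "y = inv c \<otimes> x \<otimes> c" "d \<in> carrier G" "z = inv d \<otimes> y \<otimes> d"
    using assms(2,3) unfolding conj_class_def by blast
  then have "z = inv (c \<otimes> d) \<otimes> x \<otimes> (c \<otimes> d)" "c \<otimes> d \<in> carrier G"
    using assms(1) by (simp_all add: m_assoc inv_mult_group)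
  then show ?thesis
    by (simp add: conj_classI)
qed

lemma conj_class_sym:
  assumes "x \<in> carrier G" "y \<in> conj_class G x"
  shows "x \<in> conj_class G y"
proof -
  obtain c where "c \<in> carrier G" "y = inv c \<otimes> x \<otimes> c"
    using assms(2) unfolding conj_class_def by blast
  then have "x = inv (inv c) \<otimes> y \<otimes> inv c" "inv c \<in> carrier G"
    using assms(1) by (simp_all add: m_assoc)
  then show ?thesis
    by (simp add: conj_classI)
qed

lemma conj_class_eq:
  assumes "x \<in> carrier G" "y \<in> conj_class G x"
  shows "conj_class G y = conj_class G x"
proof -
  have "y \<in> carrier G"
    using assms unfolding conj_class_def by auto
  then show ?thesis
    using assms conj_class_trans conj_class_sym by blast
qed

lemma conj_classes_eq:
  assumes "C \<in> conj_classes G" "y \<in> C"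
  shows "C = conj_class G y"
  using assms conj_class_eq unfolding conj_classes_def by auto

lemma class_is_rth_power_conj_class:
  assumes "w \<in> carrier G"
  shows "class_is_rth_power G r (conj_class G (w [^] r))"
proof -
  have "inv c \<otimes> w [^] (m :: nat) \<otimes> c = (inv c \<otimes> w \<otimes> c) [^] m" if "c \<in> carrier G" for c m
  proof (induction m)
    case (Suc m)
    have "(inv c \<otimes> w \<otimes> c) [^] Suc m = (inv c \<otimes> w [^] m \<otimes> c) \<otimes> (inv c \<otimes> w \<otimes> c)"
      using Suc by simp
    also have "\<dots> = inv c \<otimes> w [^] Suc m \<otimes> c"
      using that assms by (simp add: m_assoc)
    finally show ?case
      by simp
  qed (use that in simp)
  then show ?thesis
    using assms unfolding class_is_rth_power_def conj_class_def by auto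
qed

lemma cycle_prod_closed:
  "(\<And>i. f i \<in> carrier G) \<Longrightarrow> cycle_prod G f p j m \<in> carrier G"
  by (induction m) auto

lemma cycle_prod_add:
  assumes f: "\<And>i. f i \<in> carrier G"
  shows "cycle_prod G f p j (a + b)
    = cycle_prod G f p j a \<otimes> cycle_prod G f p ((inv_into UNIV p ^^ a) j) b"
proof (induction b)
  case 0
  show ?case
    using cycle_prod_closed[OF f] by simp
next
  case (Suc b)
  have "(inv_into UNIV p ^^ (a + b)) j = (inv_into UNIV p ^^ b) ((inv_into UNIV p ^^ a) j)"
    by (simp add: add.commute[of a b] funpow_add)
  then show ?case
    using Suc by (simp add: m_assoc cycle_prod_closed f)
qed

lemma cycle_prod_mult:
  assumes f: "\<And>i. f i \<in> carrier G" and k: "(inv_into UNIV p ^^ k) j = j"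
  shows "cycle_prod G f p j (k * m) = cycle_prod G f p j k [^] m"
proof (induction m)
  case (Suc m)
  have "cycle_prod G f p j (k * Suc m) = cycle_prod G f p j k \<otimes> cycle_prod G f p j (k * m)"
    using cycle_prod_add[where f=f and p=p and j=j and a=k and b="k * m", OF f] k by simp
  also have "\<dots> = cycle_prod G f p j k [^] Suc m"
    using Suc nat_pow_Suc2[OF cycle_prod_closed[OF f]] by simp
  finally show ?case .
qed simp

lemma cycle_prod_rotate:
  assumes f: "\<And>i. f i \<in> carrier G" and k: "(inv_into UNIV p ^^ k) j = j"
  shows "cycle_prod G f p ((inv_into UNIV p ^^ t) j) k
    = inv (cycle_prod G f p j t) \<otimes> cycle_prod G f p j k \<otimes> cycle_prod G f p j t"
proof -
  let ?a = "cycle_prod G f p j t"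
  let ?x = "cycle_prod G f p ((inv_into UNIV p ^^ t) j) k"
  have eq: "?a \<otimes> ?x = cycle_prod G f p j k \<otimes> ?a"
    using cycle_prod_add[where f=f and p=p and j=j and a=t and b=k, OF f]
      cycle_prod_add[where f=f and p=p and j=j and a=k and b=t, OF f] k
    by (simp add: add.commute)
  have "?x = inv ?a \<otimes> (?a \<otimes> ?x)"
    using cycle_prod_closed[OF f] by simp
  also have "\<dots> = inv ?a \<otimes> cycle_prod G f p j k \<otimes> ?a"
    using eq cycle_prod_closed[OF f] by (simp add: m_assoc)
  finally show ?thesis .
qed

lemma cycle_prod_in_conj_class:
  assumes "permutation p" and f: "\<And>i. f i \<in> carrier G"
    and "(p ^^ k) j = j" and "x \<in> cycle_of p j"
  shows "cycle_prod G f p x k \<in> conj_class G (cycle_prod G f p j k)"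
proof -
  obtain t where "x = (inv_into UNIV p ^^ t) j"
    using assms(4) cycle_of_inv[OF assms(1)] unfolding cycle_of_def by auto
  moreover have "(inv_into UNIV p ^^ k) j = j"
    using assms(3) funpow_fixpoint_iff[OF assms(1)] inv_funpow_fixpoint_iff[OF assms(1)] by simp
  ultimately show ?thesis
    using cycle_prod_rotate[OF f] conj_classI cycle_prod_closed[OF f] by simp
qed

lemma cycle_prod_coboundary:
  assumes B: "\<And>i. i \<in> B \<Longrightarrow> inv_into UNIV p i \<in> B"
    and f: "\<And>i. i \<in> B \<Longrightarrow> f i = \<alpha> i \<otimes> f0 i \<otimes> inv (\<alpha> (inv_into UNIV p i))"
    and \<alpha>: "\<And>i. \<alpha> i \<in> carrier G" and f0: "\<And>i. f0 i \<in> carrier G" and "j \<in> B"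
  shows "cycle_prod G f p j m = \<alpha> j \<otimes> cycle_prod G f0 p j m \<otimes> inv (\<alpha> ((inv_into UNIV p ^^ m) j))"
proof (induction m)
  case 0
  show ?case
    using \<alpha> by (simp add: m_assoc)
next
  case (Suc m)
  let ?x = "(inv_into UNIV p ^^ m) j"
  have "?x \<in> B"
    using \<open>j \<in> B\<close> B by (induction m) auto
  then have "cycle_prod G f p j (Suc m)
      = (\<alpha> j \<otimes> cycle_prod G f0 p j m \<otimes> inv (\<alpha> ?x)) \<otimes> (\<alpha> ?x \<otimes> f0 ?x \<otimes> inv (\<alpha> (inv_into UNIV p ?x)))"
    using Suc f by simp
  also have "\<dots> = \<alpha> j \<otimes> cycle_prod G f0 p j (Suc m) \<otimes> inv (\<alpha> (inv_into UNIV p ?x))"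
    using \<alpha> f0 cycle_prod_closed[OF f0] by (simp add: m_assoc)
  finally show ?case
    by simp
qed

lemma cycle_prod_funpow:
  assumes f: "\<And>i. f i \<in> carrier G" and "bij s"
  shows "cycle_prod G (\<lambda>i. cycle_prod G f s i r) (s ^^ r) j k = cycle_prod G f s j (r * k)"
proof (induction k)
  case (Suc k)
  have "(inv_into UNIV (s ^^ r) ^^ k) j = (inv_into UNIV s ^^ (r * k)) j"
    using inv_fn[OF \<open>bij s\<close>] by (simp add: funpow_mult)
  then show ?case
    using Suc cycle_prod_add[where f=f and p=s and j=j and a="r * k" and b=r, OF f] by (simp add: add.commute)
qed simp

end

definition cycles_of_type ::
    "('a, 'b) monoid_scheme \<Rightarrow> (nat \<Rightarrow> 'a) \<Rightarrow> (nat \<Rightarrow> nat) \<Rightarrow> nat set \<Rightarrow> 'a set \<Rightarrow> nat \<Rightarrow> nat set set"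
  where "cycles_of_type G F p A C k =
    {Z. \<exists>j\<in>A. Z = cycle_of p j \<and> card Z = k \<and> cycle_prod G F p j k \<in> C}"

lemma wr_type_eq_card_cycles_of_type:
  "wr_type G n (F, p) C k = card (cycles_of_type G F p {1..n} C k)"
  by (simp add: wr_type_def cycles_of_type_def)

lemma image_funpow_iterate:
  fixes s :: "'a \<Rightarrow> 'a"
  shows "((\<lambda>Z. s ` Z) ^^ m) Z = (s ^^ m) ` Z"
  by (induction m) (simp_all add: image_comp)

context group
begin

lemma dvd_card_cycles_of_type_rth_power:
  assumes s: "s permutes A" and "finite A" and "prime r" and f: "\<And>i. f i \<in> carrier G"
    and C: "C \<in> conj_classes G" and cond: "r dvd k \<or> \<not> class_is_rth_power G r C"
  shows "r dvd card (cycles_of_type G (\<lambda>i. cycle_prod G f s i r) (s ^^ r) A C k)"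
proof -
  define \<pi> where "\<pi> = s ^^ r"
  define F where "F i = cycle_prod G f s i r" for i
  define S where "S = cycles_of_type G F \<pi> A C k"
  have perm_s: "permutation s"
    using s \<open>finite A\<close> permutation_permutes by blast
  then have perm_\<pi>: "permutation \<pi>"
    unfolding \<pi>_def by (rule permutation_funpow)
  have F_\<pi>: "cycle_prod G F \<pi> j m = cycle_prod G f s j (r * m)" for j m
    unfolding F_def \<pi>_def using cycle_prod_funpow[OF f permutation_bijective[OF perm_s]] .
  have S_cases: "\<exists>j\<in>A. Z = cycle_of \<pi> j \<and> card Z = k \<and> cycle_prod G f s j (r * k) \<in> C" if "Z \<in> S" for Z
    using that F_\<pi> unfolding S_def cycles_of_type_def by auto
  have "S \<subseteq> cycle_of \<pi> ` A"
    using S_cases by blast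
  then have "finite S"
    using \<open>finite A\<close> finite_subset by blast
  moreover have "s ` Z \<in> S" if "Z \<in> S" for Z
  proof -
    obtain j where j: "j \<in> A" "Z = cycle_of \<pi> j" "card Z = k" "cycle_prod G f s j (r * k) \<in> C"
      using S_cases[OF \<open>Z \<in> S\<close>] by blast
    have "s \<circ> \<pi> = \<pi> \<circ> s"
      unfolding \<pi>_def by (simp add: fun_eq_iff funpow_swap1)
    then have image: "s ` Z = cycle_of \<pi> (s j)"
      using j(2) image_cycle_of_commute by blast
    have "(s ^^ (r * k)) j = j"
      using j(2,3) funpow_fixpoint_iff[OF perm_\<pi>] by (simp add: \<pi>_def funpow_mult)
    then have "cycle_prod G f s (s j) (r * k) \<in> conj_class G (cycle_prod G f s j (r * k))"
      using cycle_prod_in_conj_class[OF perm_s f] funpow_in_cycle_of[OF self_in_cycle_of, where m=1]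
      by simp
    then have "cycle_prod G F \<pi> (s j) k \<in> C"
      using F_\<pi> conj_classes_eq[OF C j(4)] by simp
    moreover have "card (s ` Z) = k"
      using j(3) card_image[OF permutes_inj_on[OF s]] by simp
    ultimately show ?thesis
      using image permutes_in_image[OF s] j(1) unfolding S_def cycles_of_type_def by auto
  qed
  moreover have "((\<lambda>Z. s ` Z) ^^ r) Z = Z" if "Z \<in> S" for Z
    using S_cases[OF that] image_cycle_of_self[OF perm_\<pi>]
    by (auto simp: image_funpow_iterate \<pi>_def)
  moreover have "s ` Z \<noteq> Z" if "Z \<in> S" for Z
  proof
    assume invariant: "s ` Z = Z"
    obtain j where j: "Z = cycle_of \<pi> j" "card Z = k" "cycle_prod G f s j (r * k) \<in> C"
      using S_cases[OF \<open>Z \<in> S\<close>] by blast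
    have "cycle_of s j \<subseteq> Z"
      using invariant j(1) self_in_cycle_of by (intro cycle_of_subset) auto
    moreover have "Z \<subseteq> cycle_of s j"
      unfolding j(1) \<pi>_def cycle_of_def by (auto simp: funpow_mult)
    ultimately have card_s: "card (cycle_of s j) = k"
      using j(2) by simp
    show False
      using cond
    proof
      assume "r dvd k"
      then obtain q where q: "k = r * q"
        by blast
      have "0 < q" "q < k"
        using q card_s card_cycle_of_pos[OF perm_s, of j] prime_gt_1_nat[OF \<open>prime r\<close>]
        by (auto intro: Nat.gr0I)
      moreover have "(\<pi> ^^ q) j = j"
        using funpow_fixpoint_iff[OF perm_s, of k j] card_s q by (simp add: \<pi>_def funpow_mult)
      ultimately show False
        using funpow_fixpoint_iff[OF perm_\<pi>] j(1,2) by (auto dest: nat_dvd_not_less)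
    next
      assume "\<not> class_is_rth_power G r C"
      have "(inv_into UNIV s ^^ k) j = j"
        using inv_funpow_fixpoint_iff[OF perm_s] card_s by simp
      then have "cycle_prod G f s j (r * k) = cycle_prod G f s j k [^] r"
        using cycle_prod_mult[where f=f and p=s and k=k and j=j and m=r, OF f] by (simp add: mult.commute)
      then have "class_is_rth_power G r C"
        using conj_classes_eq[OF C j(3)] class_is_rth_power_conj_class cycle_prod_closed[OF f] by simp
      with \<open>\<not> class_is_rth_power G r C\<close> show False ..
    qed
  qed
  ultimately have "r dvd card S"
    using prime_dvd_card_if_fixpoint_free[OF _ \<open>prime r\<close>] by blast
  then show ?thesis
    unfolding S_def F_def \<pi>_def .
qed

end


definition root_on ::
    "('a, 'b) monoid_scheme \<Rightarrow> nat \<Rightarrow> (nat \<Rightarrow> 'a) \<Rightarrow> (nat \<Rightarrow> nat) \<Rightarrow> nat set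
      \<Rightarrow> (nat \<Rightarrow> 'a) \<Rightarrow> (nat \<Rightarrow> nat) \<Rightarrow> bool"
  where "root_on G r F p A f s \<longleftrightarrow> s permutes A \<and> (\<forall>i. f i \<in> carrier G)
    \<and> (\<forall>i\<in>A. (s ^^ r) i = p i \<and> cycle_prod G f s i r = F i)"

lemma root_on_extend:
  assumes root: "root_on G r F p A f s" and "s' permutes A'" "A \<subseteq> A'"
    and s': "\<And>i. i \<in> A \<Longrightarrow> s' i = s i" and f': "\<And>i. i \<in> A \<Longrightarrow> f' i = f i"
    and "i \<in> A"
  shows "(s' ^^ r) i = p i" "cycle_prod G f' s' i r = F i"
proof -
  have s: "s permutes A"
    using root unfolding root_on_def by blast
  have pow: "(s' ^^ m) i = (s ^^ m) i" if "i \<in> A" for i m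
  proof (induction m)
    case (Suc m)
    then show ?case
      using s' permutes_in_image[OF permutes_funpow[OF s]] that by simp
  qed simp
  have inv: "inv_into UNIV s' i = inv_into UNIV s i \<and> inv_into UNIV s' i \<in> A" if "i \<in> A" for i
  proof -
    have inA: "inv_into UNIV s i \<in> A"
      using permutes_in_image[OF permutes_inv[OF s]] that by simp
    have "s' (inv_into UNIV s i) = i"
      using s'[OF inA] permutes_inverses(1)[OF s] by simp
    then have "inv_into UNIV s' i = inv_into UNIV s i"
      using permutes_inj[OF \<open>s' permutes A'\<close>] by (auto intro: inv_f_eq)
    with inA show ?thesis
      by simp
  qed
  show "(s' ^^ r) i = p i"
    using root pow[OF \<open>i \<in> A\<close>] \<open>i \<in> A\<close> unfolding root_on_def by auto
  have "cycle_prod G f' s' i r = cycle_prod G f s i r"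
    using cycle_prod_cong[of A s' s f' f, OF inv f' \<open>i \<in> A\<close>] .
  then show "cycle_prod G f' s' i r = F i"
    using root \<open>i \<in> A\<close> unfolding root_on_def by auto
qed

lemma root_on_Un:
  assumes "root_on G r F p A f s" "root_on G r F p B g t" "A \<inter> B = {}"
  shows "root_on G r F p (A \<union> B) (\<lambda>i. if i \<in> A then f i else g i) (s \<circ> t)"
proof -
  have s: "s permutes A" and t: "t permutes B"
    using assms unfolding root_on_def by auto
  have st: "s \<circ> t permutes A \<union> B"
    using permutes_compose[OF permutes_subset[OF t] permutes_subset[OF s]] by blast
  let ?h = "\<lambda>i. if i \<in> A then f i else g i"
  have "((s \<circ> t) ^^ r) i = p i \<and> cycle_prod G ?h (s \<circ> t) i r = F i" if "i \<in> A" for i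
  proof -
    have "(s \<circ> t) i = s i" if "i \<in> A" for i
      using that assms(3) permutes_not_in[OF t] by (simp add: disjoint_iff)
    then show ?thesis
      using root_on_extend[OF assms(1) st, of ?h] that by auto
  qed
  moreover have "((s \<circ> t) ^^ r) i = p i \<and> cycle_prod G ?h (s \<circ> t) i r = F i" if "i \<in> B" for i
  proof -
    have "(s \<circ> t) i = t i" if "i \<in> B" for i
      using that assms(3) permutes_in_image[OF t, of i] permutes_not_in[OF s, of "t i"] by auto
    moreover have "?h i = g i" if "i \<in> B" for i
      using that assms(3) by auto
    ultimately show ?thesis
      using root_on_extend[OF assms(2) st, of ?h] that by auto
  qed
  ultimately show ?thesis
    using st assms(1,2) unfolding root_on_def by auto
qed

lemma wr_is_rth_power_if_root_on:
  assumes "group G" and "p permutes {1..n}" and F: "\<And>i. i \<notin> {1..n} \<Longrightarrow> F i = \<one>\<^bsub>G\<^esub>"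
    and root: "root_on G r F p {1..n} f s"
  shows "wr_is_rth_power G n r (F, p)"
proof -
  interpret group G by fact
  define f' where "f' i = (if i \<in> {1..n} then f i else \<one>\<^bsub>G\<^esub>)" for i
  have s: "s permutes {1..n}"
    using root unfolding root_on_def by blast
  then have "(f', s) \<in> wr_carrier G n"
    using root unfolding wr_carrier_def root_on_def f'_def by auto
  moreover have "(s ^^ r) i = p i" for i
  proof (cases "i \<in> {1..n}")
    case True
    then show ?thesis
      using root unfolding root_on_def by blast
  next
    case False
    then show ?thesis
      using permutes_not_in[OF permutes_funpow[OF s]] permutes_not_in[OF \<open>p permutes {1..n}\<close>]
      by metis
  qed
  moreover have "cycle_prod G f' s i r = F i" for i
  proof (cases "i \<in> {1..n}")
    case True
    then show ?thesis
      using root_on_extend(2)[OF root s] by (simp add: f'_def)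
  next
    case False
    have "(inv_into UNIV s ^^ t) i = i" for t
      using permutes_not_in[OF permutes_funpow[OF permutes_inv[OF s]] False]
        inv_fn[OF permutes_bij[OF s]] by metis
    then have "cycle_prod G f' s i t = \<one>\<^bsub>G\<^esub>" for t
      using False by (induction t) (auto simp: f'_def)
    then show ?thesis
      using F[OF False] by simp
  qed
  ultimately have "(f', s) \<in> wr_carrier G n \<and> wr_pow G (f', s) r = (F, p)"
    using wr_pow_eq[OF permutes_bij[OF s], of G f' r] by (simp add: fun_eq_iff)
  then show ?thesis
    unfolding wr_is_rth_power_def by blast
qed


lemma exists_cyclic_root:
  fixes \<phi> :: "nat \<Rightarrow> nat"
  assumes "0 < L" and inj: "inj_on \<phi> {..<L}" and periodic: "\<And>m. \<phi> (m mod L) = \<phi> m"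
    and shift: "\<And>m. p (\<phi> m) = \<phi> (m + r)"
  obtains s where "s permutes \<phi> ` {..<L}" "cycle_of s (\<phi> 0) = \<phi> ` {..<L}"
    "\<And>i. i \<in> \<phi> ` {..<L} \<Longrightarrow> (s ^^ r) i = p i"
proof -
  define B where "B = \<phi> ` {..<L}"
  define s where "s i = (if i \<in> B then \<phi> (Suc (the_inv_into {..<L} \<phi> i)) else i)" for i
  have mod_less: "m mod L \<in> {..<L}" for m
    using \<open>0 < L\<close> by simp
  have range: "range \<phi> = B"
  proof -
    have "\<phi> m \<in> B" for m
      using periodic[of m] mod_less[of m] unfolding B_def by (metis imageI)
    then show ?thesis
      unfolding B_def by auto
  qed
  have s_\<phi>: "s (\<phi> m) = \<phi> (Suc m)" for m
  proof -
    have "the_inv_into {..<L} \<phi> (\<phi> m) = m mod L"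
      using the_inv_into_f_f[OF inj mod_less[of m]] periodic[of m] by simp
    then have "s (\<phi> m) = \<phi> (Suc (m mod L))"
      using range unfolding s_def by auto
    also have "\<dots> = \<phi> (Suc m)"
      using periodic[of "Suc (m mod L)"] periodic[of "Suc m"] by (simp add: mod_Suc_eq)
    finally show ?thesis .
  qed
  have pow: "(s ^^ t) (\<phi> m) = \<phi> (m + t)" for t m
    by (induction t) (simp_all add: s_\<phi>)
  have "B \<subseteq> s ` B"
  proof
    fix i assume "i \<in> B"
    then obtain m where m: "i = \<phi> m"
      using range by auto
    have "\<phi> m = \<phi> (m + L)"
      using periodic[of m] periodic[of "m + L"] by simp
    also have "\<dots> = s (\<phi> (m + L - 1))"
      using s_\<phi>[of "m + L - 1"] \<open>0 < L\<close> by simp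
    finally show "i \<in> s ` B"
      using m range by auto
  qed
  moreover have "s ` B \<subseteq> B"
    using s_\<phi> range by auto
  ultimately have "bij_betw s B B"
    using eq_card_imp_inj_on[of B s] unfolding B_def bij_betw_def by auto
  then have "s permutes B"
    by (rule bij_imp_permutes) (simp add: s_def)
  moreover have "cycle_of s (\<phi> 0) = B"
    using range pow unfolding cycle_of_def by auto
  moreover have "(s ^^ r) i = p i" if "i \<in> B" for i
    using that range pow shift by auto
  ultimately show ?thesis
    using that unfolding B_def by blast
qed

context group
begin

lemma cohomologous_on_cycle:
  assumes "permutation p" and F: "\<And>i. F i \<in> carrier G" and F0: "\<And>i. F0 i \<in> carrier G"
    and conj: "cycle_prod G F p j (card (cycle_of p j))
      \<in> conj_class G (cycle_prod G F0 p j (card (cycle_of p j)))"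
  obtains \<alpha> where "\<And>i. \<alpha> i \<in> carrier G"
    "\<And>i. i \<in> cycle_of p j \<Longrightarrow> F i = \<alpha> i \<otimes> F0 i \<otimes> inv (\<alpha> (inv_into UNIV p i))"
proof -
  define k where "k = card (cycle_of p j)"
  define walk where "walk = (\<lambda>t. (inv_into UNIV p ^^ t) j)"
  obtain c where c: "c \<in> carrier G"
    and ck: "cycle_prod G F p j k = inv c \<otimes> cycle_prod G F0 p j k \<otimes> c"
    using conj unfolding conj_class_def k_def by blast
  define \<beta> where "\<beta> t = inv (cycle_prod G F p j t) \<otimes> inv c \<otimes> cycle_prod G F0 p j t" for t
  define \<alpha> where "\<alpha> i = \<beta> (the_inv_into {..<k} walk i)" for i
  have bij: "bij_betw walk {..<k} (cycle_of p j)"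
    using bij_betw_funpow_cycle_of[OF permutation_inverse[OF \<open>permutation p\<close>], of j]
    by (simp add: walk_def k_def cycle_of_inv \<open>permutation p\<close>)
  have closed: "\<And>t. cycle_prod G F p j t \<in> carrier G" "\<And>t. cycle_prod G F0 p j t \<in> carrier G"
    using cycle_prod_closed F F0 by auto
  have \<beta>_carrier: "\<beta> t \<in> carrier G" for t
    unfolding \<beta>_def using closed c by simp
  have \<beta>_step: "F (walk t) = \<beta> t \<otimes> F0 (walk t) \<otimes> inv (\<beta> (Suc t))" for t
    unfolding \<beta>_def walk_def using closed c F F0 by (simp add: m_assoc inv_mult_group)
  have \<beta>_period: "\<beta> k = \<beta> 0"
    unfolding \<beta>_def using ck closed c by (simp add: m_assoc inv_mult_group)
  have \<beta>_mod: "\<beta> (Suc t mod k) = \<beta> (Suc t)" if "t < k" for t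
    using that \<beta>_period by (cases "Suc t = k") auto
  have \<alpha>_walk: "\<alpha> (walk t) = \<beta> t" if "t < k" for t
    unfolding \<alpha>_def using the_inv_into_f_f[OF bij_betw_imp_inj_on[OF bij]] that by simp
  have "F i = \<alpha> i \<otimes> F0 i \<otimes> inv (\<alpha> (inv_into UNIV p i))" if "i \<in> cycle_of p j" for i
  proof -
    obtain t where t: "t < k" "i = walk t"
      using bij \<open>i \<in> cycle_of p j\<close> unfolding bij_betw_def by auto
    have "(inv_into UNIV p ^^ k) j = j"
      using inv_funpow_fixpoint_iff[OF \<open>permutation p\<close>] by (simp add: k_def)
    then have "inv_into UNIV p i = walk (Suc t mod k)"
      using t funpow_mod_eq unfolding walk_def by (metis funpow.simps(2) comp_apply)
    then have "\<alpha> (inv_into UNIV p i) = \<beta> (Suc t)"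
      using \<alpha>_walk \<beta>_mod t card_cycle_of_pos[OF \<open>permutation p\<close>] unfolding k_def by simp
    then show ?thesis
      using \<beta>_step \<alpha>_walk t by simp
  qed
  moreover have "\<alpha> i \<in> carrier G" for i
    unfolding \<alpha>_def by (rule \<beta>_carrier)
  ultimately show ?thesis
    using that by blast
qed

lemma cohomologous_if_conj_cycle_products:
  assumes "permutation p" and F: "\<And>i. F i \<in> carrier G" and F0: "\<And>i. F0 i \<in> carrier G"
    and conj: "\<And>j. j \<in> B \<Longrightarrow> cycle_prod G F p j (card (cycle_of p j))
      \<in> conj_class G (cycle_prod G F0 p j (card (cycle_of p j)))"
  obtains \<alpha> where "\<And>i. \<alpha> i \<in> carrier G"
    "\<And>i. i \<in> B \<Longrightarrow> F i = \<alpha> i \<otimes> F0 i \<otimes> inv (\<alpha> (inv_into UNIV p i))"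
proof -
  have "\<forall>j\<in>B. \<exists>\<alpha>. (\<forall>i. \<alpha> i \<in> carrier G)
    \<and> (\<forall>i\<in>cycle_of p j. F i = \<alpha> i \<otimes> F0 i \<otimes> inv (\<alpha> (inv_into UNIV p i)))"
    using cohomologous_on_cycle[OF \<open>permutation p\<close> F F0 conj] by metis
  then obtain A where A: "\<And>j i. j \<in> B \<Longrightarrow> A j i \<in> carrier G"
    "\<And>j i. j \<in> B \<Longrightarrow> i \<in> cycle_of p j \<Longrightarrow> F i = A j i \<otimes> F0 i \<otimes> inv (A j (inv_into UNIV p i))"
    by metis
  define rep where "rep i = (SOME j. j \<in> B \<and> i \<in> cycle_of p j)" for i
  define \<alpha> where "\<alpha> i = (if \<exists>j. j \<in> B \<and> i \<in> cycle_of p j then A (rep i) i else \<one>)" for i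
  have "\<alpha> i \<in> carrier G" for i
    unfolding \<alpha>_def rep_def using A(1) by (auto intro: someI2_ex)
  moreover have "F i = \<alpha> i \<otimes> F0 i \<otimes> inv (\<alpha> (inv_into UNIV p i))" if "i \<in> B" for i
  proof -
    have same_cycle: "inv_into UNIV p i \<in> cycle_of p j \<longleftrightarrow> i \<in> cycle_of p j" for j
      using cycle_of_eq[OF \<open>permutation p\<close>] inv_in_cycle_of[OF \<open>permutation p\<close> self_in_cycle_of]
        self_in_cycle_of by metis
    have rep: "rep i \<in> B" "i \<in> cycle_of p (rep i)"
      unfolding rep_def using that self_in_cycle_of by (auto intro: someI2[of _ i])
    then show ?thesis
      using A(2) same_cycle unfolding \<alpha>_def rep_def by auto
  qed
  ultimately show ?thesis
    using that by blast
qed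

lemma root_on_if_conj_cycle_products:
  assumes "permutation p" and s: "s permutes B" and s_r: "\<And>i. i \<in> B \<Longrightarrow> (s ^^ r) i = p i"
    and F: "\<And>i. F i \<in> carrier G" and f0: "\<And>i. f0 i \<in> carrier G"
    and conj: "\<And>j. j \<in> B \<Longrightarrow> cycle_prod G F p j (card (cycle_of p j))
      \<in> conj_class G (cycle_prod G f0 s j (r * card (cycle_of p j)))"
  obtains f where "root_on G r F p B f s"
proof -
  define F0 where "F0 i = cycle_prod G f0 s i r" for i
  have F0_closed: "\<And>i. F0 i \<in> carrier G"
    unfolding F0_def by (rule cycle_prod_closed[OF f0])
  have inv_p: "inv_into UNIV p i = inv_into UNIV (s ^^ r) i \<and> inv_into UNIV p i \<in> B"
    if "i \<in> B" for i
  proof -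
    have inB: "inv_into UNIV (s ^^ r) i \<in> B"
      using permutes_in_image[OF permutes_inv[OF permutes_funpow[OF s]]] that by simp
    then have "p (inv_into UNIV (s ^^ r) i) = i"
      using s_r permutes_inverses(1)[OF permutes_funpow[OF s]] by metis
    then have "inv_into UNIV p i = inv_into UNIV (s ^^ r) i"
      using bij_is_inj[OF permutation_bijective[OF \<open>permutation p\<close>]] by (rule inv_f_eq[rotated])
    with inB show ?thesis
      by simp
  qed
  have "cycle_prod G F0 p j k = cycle_prod G f0 s j (r * k)" if "j \<in> B" for j k
  proof -
    have "cycle_prod G F0 p j k = cycle_prod G F0 (s ^^ r) j k"
      using inv_p refl that by (rule cycle_prod_cong)
    also have "\<dots> = cycle_prod G f0 s j (r * k)"
      unfolding F0_def by (rule cycle_prod_funpow[where f=f0, OF f0 permutes_bij[OF s]])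
    finally show ?thesis .
  qed
  then have "cycle_prod G F p j (card (cycle_of p j)) \<in> conj_class G (cycle_prod G F0 p j (card (cycle_of p j)))"
    if "j \<in> B" for j
    using conj[OF that] that by simp
  then obtain \<alpha> where \<alpha>: "\<And>i. \<alpha> i \<in> carrier G"
    and F_eq: "\<And>i. i \<in> B \<Longrightarrow> F i = \<alpha> i \<otimes> F0 i \<otimes> inv (\<alpha> (inv_into UNIV p i))"
    using cohomologous_if_conj_cycle_products[of p F F0 B] \<open>permutation p\<close> F F0_closed by blast
  define f where "f i = \<alpha> i \<otimes> f0 i \<otimes> inv (\<alpha> (inv_into UNIV s i))" for i
  have "cycle_prod G f s i r = F i" if "i \<in> B" for i
  proof -
    have "cycle_prod G f s i r = \<alpha> i \<otimes> F0 i \<otimes> inv (\<alpha> ((inv_into UNIV s ^^ r) i))"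
      unfolding F0_def
    proof (rule cycle_prod_coboundary[OF _ _ \<alpha> f0 that])
      show "inv_into UNIV s i \<in> B" if "i \<in> B" for i
        using permutes_in_image[OF permutes_inv[OF s]] that by simp
    qed (simp add: f_def)
    also have "(inv_into UNIV s ^^ r) i = inv_into UNIV p i"
      using inv_p[OF that] inv_fn[OF permutes_bij[OF s]] by simp
    finally show ?thesis
      using F_eq[OF that] by simp
  qed
  moreover have "f i \<in> carrier G" for i
    unfolding f_def using \<alpha> f0 by simp
  ultimately have "root_on G r F p B f s"
    unfolding root_on_def using s s_r by simp
  then show ?thesis
    using that by blast
qed

lemma cycle_prod_point_mass:
  assumes "permutation s" and y: "y \<in> carrier G" and "j \<in> cycle_of s b"
  shows "cycle_prod G (\<lambda>i. if i = b then y else \<one>) s j (card (cycle_of s b) * m)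
    \<in> conj_class G (y [^] m)"
proof -
  define L where "L = card (cycle_of s b)"
  define f0 where "f0 i = (if i = b then y else \<one>)" for i
  have f0: "f0 i \<in> carrier G" for i
    unfolding f0_def using y by simp
  have b_fix: "(inv_into UNIV s ^^ t) b = b \<longleftrightarrow> L dvd t" for t
    using inv_funpow_fixpoint_iff[OF \<open>permutation s\<close>] by (simp add: L_def)
  have "cycle_prod G f0 s b t = (if t = 0 then \<one> else y)" if "t \<le> L" for t
    using that
  proof (induction t)
    case (Suc t)
    then show ?case
      using b_fix[of t] y nat_dvd_not_less[of t L] by (auto simp: f0_def)
  qed simp
  then have "cycle_prod G f0 s b L = y"
    using card_cycle_of_pos[OF \<open>permutation s\<close>, of b] by (simp add: L_def)
  then have "cycle_prod G f0 s b (L * m) = y [^] m"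
    using cycle_prod_mult[where f=f0 and p=s and k=L and j=b and m=m, OF f0] b_fix by simp
  moreover have "(s ^^ (L * m)) b = b"
    using funpow_fixpoint_iff[OF \<open>permutation s\<close>] by (simp add: L_def)
  ultimately show ?thesis
    using cycle_prod_in_conj_class[where f=f0 and k="L * m", OF \<open>permutation s\<close> f0 _ \<open>j \<in> cycle_of s b\<close>]
    unfolding f0_def L_def by simp
qed

lemma root_on_cyclic_block:
  assumes "permutation p" and F: "\<And>i. F i \<in> carrier G" and y: "y \<in> carrier G"
    and s: "s permutes B" "finite B" "cycle_of s b = B" and s_r: "\<And>i. i \<in> B \<Longrightarrow> (s ^^ r) i = p i"
    and length: "\<And>j. j \<in> B \<Longrightarrow> r * card (cycle_of p j) = card B * m"
    and conj: "\<And>j. j \<in> B \<Longrightarrow> cycle_prod G F p j (card (cycle_of p j)) \<in> conj_class G (y [^] m)"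
  obtains f where "root_on G r F p B f s"
proof (rule root_on_if_conj_cycle_products[OF \<open>permutation p\<close> s(1) s_r F])
  let ?f0 = "\<lambda>i. if i = b then y else \<one>"
  show "?f0 i \<in> carrier G" for i
    using y by simp
  have perm_s: "permutation s"
    using s permutation_permutes by blast
  fix j assume "j \<in> B"
  then have "cycle_prod G ?f0 s j (r * card (cycle_of p j)) \<in> conj_class G (y [^] m)"
    using cycle_prod_point_mass[OF perm_s y, of j b m] length s(3) by simp
  then show "cycle_prod G F p j (card (cycle_of p j))
      \<in> conj_class G (cycle_prod G ?f0 s j (r * card (cycle_of p j)))"
    using conj[OF \<open>j \<in> B\<close>] conj_class_eq[of "y [^] m"] y by simp
qed (use that in blast)

end


context group
begin

lemma root_on_coprime_cycle:
  assumes "permutation p" and F: "\<And>i. F i \<in> carrier G" and "prime r"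
    and not_dvd: "\<not> r dvd card (cycle_of p j)"
    and y: "y \<in> carrier G" and root: "cycle_prod G F p j (card (cycle_of p j)) = y [^] r"
  obtains f s where "root_on G r F p (cycle_of p j) f s"
proof -
  define k where "k = card (cycle_of p j)"
  have "0 < k"
    unfolding k_def by (rule card_cycle_of_pos[OF \<open>permutation p\<close>])
  have "coprime r k"
    using prime_imp_coprime[OF \<open>prime r\<close> not_dvd] by (simp add: k_def)
  then obtain u v where uv: "r * u = k * v + 1"
    using bezout_nat[of r k] prime_gt_0_nat[OF \<open>prime r\<close>] by auto
  define \<phi> where "\<phi> = (\<lambda>m. (p ^^ (u * m)) j)"
  have \<phi>_eq: "\<phi> a = \<phi> b \<longleftrightarrow> u * a mod k = u * b mod k" for a b
    unfolding \<phi>_def k_def by (rule funpow_eq_iff_mod[OF \<open>permutation p\<close>])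
  have undo_u: "r * (u * q) mod k = q mod k" for q
  proof -
    have "r * (u * q) = q + k * (v * q)"
      using uv by (simp add: mult.assoc[symmetric] distrib_right)
    then show ?thesis
      by simp
  qed
  have "inj_on \<phi> {..<k}"
  proof (rule inj_onI)
    fix a b assume "a \<in> {..<k}" "b \<in> {..<k}" "\<phi> a = \<phi> b"
    then have "r * (u * a) mod k = r * (u * b) mod k"
      using \<phi>_eq by (metis mod_mult_right_eq)
    then show "a = b"
      using undo_u \<open>a \<in> {..<k}\<close> \<open>b \<in> {..<k}\<close> by simp
  qed
  moreover have "\<phi> (m mod k) = \<phi> m" for m
    using \<phi>_eq by (simp add: mod_mult_right_eq)
  moreover have "p (\<phi> m) = \<phi> (m + r)" for m
  proof -
    have "u * (m + r) = Suc (u * m) + k * v"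
      using uv by (simp add: distrib_left mult.commute[of u r])
    then have "u * (m + r) mod k = Suc (u * m) mod k"
      by simp
    then show ?thesis
      using \<phi>_eq[of "m + r" "Suc m"] funpow_eq_iff_mod[OF \<open>permutation p\<close>, of "Suc (u * m)" j]
      unfolding \<phi>_def k_def by simp
  qed
  ultimately obtain s where s: "s permutes \<phi> ` {..<k}" "cycle_of s (\<phi> 0) = \<phi> ` {..<k}"
    "\<And>i. i \<in> \<phi> ` {..<k} \<Longrightarrow> (s ^^ r) i = p i"
    using exists_cyclic_root[OF \<open>0 < k\<close>] by blast
  have image: "\<phi> ` {..<k} = cycle_of p j"
  proof
    show "\<phi> ` {..<k} \<subseteq> cycle_of p j"
      unfolding \<phi>_def using funpow_in_cycle_of[OF self_in_cycle_of] by blast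
    show "cycle_of p j \<subseteq> \<phi> ` {..<k}"
    proof
      fix i assume "i \<in> cycle_of p j"
      then obtain q where "i = (p ^^ q) j"
        unfolding cycle_of_def by blast
      then have "i = \<phi> (r * q mod k)"
        using undo_u[of q] funpow_eq_iff_mod[OF \<open>permutation p\<close>, of q j]
        unfolding \<phi>_def k_def by (simp add: mod_mult_right_eq mult.left_commute)
      then show "i \<in> \<phi> ` {..<k}"
        using \<open>0 < k\<close> by auto
    qed
  qed
  show ?thesis
  proof (rule root_on_cyclic_block[OF \<open>permutation p\<close> F y])
    show "s permutes cycle_of p j" "cycle_of s j = cycle_of p j"
      "\<And>i. i \<in> cycle_of p j \<Longrightarrow> (s ^^ r) i = p i"
      using s image by (simp_all add: \<phi>_def)
    show "finite (cycle_of p j)"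
      by (rule finite_cycle_of[OF \<open>permutation p\<close>])
    fix i assume "i \<in> cycle_of p j"
    then show "r * card (cycle_of p i) = card (cycle_of p j) * r"
      using cycle_of_eq[OF \<open>permutation p\<close>] by simp
    have "(p ^^ k) j = j"
      using funpow_fixpoint_iff[OF \<open>permutation p\<close>] by (simp add: k_def)
    then show "cycle_prod G F p i (card (cycle_of p i)) \<in> conj_class G (y [^] r)"
      using cycle_prod_in_conj_class[where f=F and k=k, OF \<open>permutation p\<close> F _ \<open>i \<in> cycle_of p j\<close>]
        cycle_of_eq[OF \<open>permutation p\<close> \<open>i \<in> cycle_of p j\<close>] root by (simp add: k_def)
  qed (use that in blast)
qed

lemma root_on_cycle_tuple:
  assumes "permutation p" and F: "\<And>i. F i \<in> carrier G" and "0 < r" and x: "x \<in> carrier G"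
    and "finite T" "card T = r"
    and T: "\<And>Z. Z \<in> T \<Longrightarrow> \<exists>j. Z = cycle_of p j \<and> card Z = k \<and> cycle_prod G F p j k \<in> conj_class G x"
  obtains f s where "root_on G r F p (\<Union>T) f s"
proof -
  obtain e where e: "bij_betw e {..<r} T"
    using ex_bij_betw_nat_finite[OF \<open>finite T\<close>] \<open>card T = r\<close> by (auto simp: atLeast0LessThan)
  have "\<forall>a<r. \<exists>j. e a = cycle_of p j \<and> card (e a) = k \<and> cycle_prod G F p j k \<in> conj_class G x"
    using T bij_betw_apply[OF e] by blast
  then obtain b where b: "\<And>a. a < r \<Longrightarrow> e a = cycle_of p (b a)"
    "\<And>a. a < r \<Longrightarrow> card (cycle_of p (b a)) = k"
    "\<And>a. a < r \<Longrightarrow> cycle_prod G F p (b a) k \<in> conj_class G x"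
    by metis
  have "0 < k"
    using b(2)[OF \<open>0 < r\<close>] card_cycle_of_pos[OF \<open>permutation p\<close>] by metis
  have distinct: "a = a'" if "a < r" "a' < r" "i \<in> cycle_of p (b a)" "i \<in> cycle_of p (b a')" for a a' i
    using that b(1) cycle_of_eq[OF \<open>permutation p\<close>] bij_betw_imp_inj_on[OF e]
    by (metis inj_onD lessThan_iff)
  define \<phi> where "\<phi> = (\<lambda>m. (p ^^ (m div r)) (b (m mod r)))"
  have \<phi>_in: "\<phi> m \<in> cycle_of p (b (m mod r))" for m
    unfolding \<phi>_def by (rule funpow_in_cycle_of[OF self_in_cycle_of])
  have \<phi>_eq: "(p ^^ q) (b a) = (p ^^ q') (b a) \<longleftrightarrow> q mod k = q' mod k" if "a < r" for a q q'
    using funpow_eq_iff_mod[OF \<open>permutation p\<close>] b(2)[OF that] by simp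
  have inj: "inj_on \<phi> {..<r * k}"
  proof (rule inj_onI)
    fix m m' assume m: "m \<in> {..<r * k}" "m' \<in> {..<r * k}" "\<phi> m = \<phi> m'"
    have "m mod r = m' mod r"
      using distinct[of "m mod r" "m' mod r"] \<phi>_in m(3) \<open>0 < r\<close> by (metis mod_less_divisor)
    moreover have "m div r < k" "m' div r < k"
      using m(1,2) by (simp_all add: less_mult_imp_div_less mult.commute)
    ultimately have "m div r = m' div r"
      using m(3) \<phi>_eq[of "m mod r"] \<open>0 < r\<close> unfolding \<phi>_def by simp
    with \<open>m mod r = m' mod r\<close> show "m = m'"
      by (metis div_mult_mod_eq)
  qed
  moreover have "\<phi> (m mod (r * k)) = \<phi> m" for m
    using \<phi>_eq[of "m mod r" "m div r mod k" "m div r"] \<open>0 < r\<close>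
    unfolding \<phi>_def by (simp add: mod_mult2_eq)
  moreover have "p (\<phi> m) = \<phi> (m + r)" for m
    unfolding \<phi>_def using \<open>0 < r\<close> by (simp add: div_add_self2)
  moreover have "0 < r * k"
    using \<open>0 < r\<close> \<open>0 < k\<close> by simp
  ultimately obtain s where s: "s permutes \<phi> ` {..<r * k}" "cycle_of s (\<phi> 0) = \<phi> ` {..<r * k}"
    "\<And>i. i \<in> \<phi> ` {..<r * k} \<Longrightarrow> (s ^^ r) i = p i"
    using exists_cyclic_root by blast
  have in_tuple: "\<exists>a<r. i \<in> cycle_of p (b a)" if "i \<in> \<Union>T" for i
    using that b(1) bij_betw_imp_surj_on[OF e] by auto
  have image: "\<phi> ` {..<r * k} = \<Union>T"
  proof
    show "\<phi> ` {..<r * k} \<subseteq> \<Union>T"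
    proof (rule image_subsetI)
      fix m
      have "m mod r < r"
        using \<open>0 < r\<close> by simp
      then show "\<phi> m \<in> \<Union>T"
        using bij_betw_apply[OF e] \<phi>_in b(1) by blast
    qed
    show "\<Union>T \<subseteq> \<phi> ` {..<r * k}"
    proof
      fix i assume "i \<in> \<Union>T"
      then obtain a q where a: "a < r" "i = (p ^^ q) (b a)"
        using in_tuple unfolding cycle_of_def by blast
      have "r * (q mod k) + a < r * Suc (q mod k)"
        using a(1) by simp
      also have "\<dots> \<le> r * k"
        using \<open>0 < k\<close> by (intro mult_le_mono2) (simp add: Suc_leI)
      finally have "r * (q mod k) + a \<in> {..<r * k}"
        by simp
      moreover have "i = \<phi> (r * (q mod k) + a)"
      proof -
        have "\<phi> (r * (q mod k) + a) = (p ^^ (q mod k)) (b a)"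
          using a(1) unfolding \<phi>_def by simp
        then show ?thesis
          using \<phi>_eq[OF a(1), of "q mod k" q] a(2) by simp
      qed
      ultimately show "i \<in> \<phi> ` {..<r * k}"
        by blast
    qed
  qed
  have card_k: "card (cycle_of p i) = k" and in_class: "cycle_prod G F p i k \<in> conj_class G x"
    if i: "i \<in> \<Union>T" for i
  proof -
    obtain a where a: "a < r" "i \<in> cycle_of p (b a)"
      using in_tuple[OF i] by blast
    show "card (cycle_of p i) = k"
      using cycle_of_eq[OF \<open>permutation p\<close> a(2)] b(2)[OF a(1)] by simp
    have "(p ^^ k) (b a) = b a"
      using funpow_fixpoint_iff[OF \<open>permutation p\<close>] b(2)[OF a(1)] by simp
    then have "cycle_prod G F p i k \<in> conj_class G (cycle_prod G F p (b a) k)"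
      using cycle_prod_in_conj_class[where f=F, OF \<open>permutation p\<close> F _ a(2)] by simp
    then show "cycle_prod G F p i k \<in> conj_class G x"
      using conj_class_eq[OF x b(3)[OF a(1)]] by simp
  qed
  show ?thesis
  proof (rule root_on_cyclic_block[OF \<open>permutation p\<close> F x])
    show "s permutes \<Union>T" "cycle_of s (\<phi> 0) = \<Union>T" "\<And>i. i \<in> \<Union>T \<Longrightarrow> (s ^^ r) i = p i"
      using s image by simp_all
    show "finite (\<Union>T)"
      using image by (metis finite_imageI finite_lessThan)
    fix i assume "i \<in> \<Union>T"
    then show "r * card (cycle_of p i) = card (\<Union>T) * 1"
      using card_k card_image[OF inj] image by simp
    show "cycle_prod G F p i (card (cycle_of p i)) \<in> conj_class G (x [^] (1::nat))"
      using card_k in_class \<open>i \<in> \<Union>T\<close> x by simp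
  qed (use that in blast)
qed

end


definition rth_power_type :: "('a, 'b) monoid_scheme \<Rightarrow> nat \<Rightarrow> (nat \<Rightarrow> 'a) \<Rightarrow> (nat \<Rightarrow> nat) \<Rightarrow> nat set \<Rightarrow> bool"
  where "rth_power_type G r F p A \<longleftrightarrow> (\<forall>C\<in>conj_classes G. \<forall>k.
    (r dvd k \<or> \<not> class_is_rth_power G r C) \<longrightarrow> r dvd card (cycles_of_type G F p A C k))"

lemma finite_cycles_of_type:
  assumes "finite A"
  shows "finite (cycles_of_type G F p A C k)"
proof -
  have "cycles_of_type G F p A C k \<subseteq> cycle_of p ` A"
    unfolding cycles_of_type_def by blast
  then show ?thesis
    using assms finite_subset by blast
qed

lemma cycles_of_type_empty:
  assumes "p permutes A" "finite A" "k \<notin> {1..card A}"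
  shows "cycles_of_type G F p A C k = {}"
proof -
  have "0 < card (cycle_of p j) \<and> card (cycle_of p j) \<le> card A" if "j \<in> A" for j
    using card_cycle_of_pos card_mono[OF \<open>finite A\<close>] cycle_of_subset permutes_in_image[OF \<open>p permutes A\<close>]
      assms(1,2) that permutation_permutes by metis
  then show ?thesis
    using assms(3) unfolding cycles_of_type_def by fastforce
qed

lemma cycles_of_type_Diff:
  assumes "permutation p" and T: "\<And>Z. Z \<in> T \<Longrightarrow> \<exists>j. Z = cycle_of p j"
  shows "cycles_of_type G F p (A - \<Union>T) C k = cycles_of_type G F p A C k - T"
proof
  show "cycles_of_type G F p (A - \<Union>T) C k \<subseteq> cycles_of_type G F p A C k - T"
  proof
    fix Z assume "Z \<in> cycles_of_type G F p (A - \<Union>T) C k"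
    then obtain j where j: "j \<in> A" "j \<notin> \<Union>T" "Z = cycle_of p j" "card Z = k" "cycle_prod G F p j k \<in> C"
      unfolding cycles_of_type_def by blast
    then have "Z \<notin> T"
      using self_in_cycle_of by blast
    with j show "Z \<in> cycles_of_type G F p A C k - T"
      unfolding cycles_of_type_def by blast
  qed
  show "cycles_of_type G F p A C k - T \<subseteq> cycles_of_type G F p (A - \<Union>T) C k"
  proof
    fix Z assume Z: "Z \<in> cycles_of_type G F p A C k - T"
    then obtain j where j: "j \<in> A" "Z = cycle_of p j" "card Z = k" "cycle_prod G F p j k \<in> C"
      unfolding cycles_of_type_def by blast
    have "j \<notin> \<Union>T"
    proof
      assume "j \<in> \<Union>T"
      then obtain j' where "cycle_of p j' \<in> T" "j \<in> cycle_of p j'"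
        using T by blast
      then show False
        using Z j(2) cycle_of_eq[OF \<open>permutation p\<close>] by auto
    qed
    then show "Z \<in> cycles_of_type G F p (A - \<Union>T) C k"
      using j unfolding cycles_of_type_def by blast
  qed
qed

lemma invariant_Diff_cycles:
  assumes "permutation p" and A: "\<And>i. i \<in> A \<Longrightarrow> p i \<in> A"
    and T: "\<And>Z. Z \<in> T \<Longrightarrow> \<exists>j. Z = cycle_of p j" and "i \<in> A - \<Union>T"
  shows "p i \<in> A - \<Union>T"
proof -
  have "i \<in> Z" if "Z \<in> T" "p i \<in> Z" for Z
    using inv_in_cycle_of[OF \<open>permutation p\<close>] T[OF that(1)] that(2)
      permutation_bijective[OF \<open>permutation p\<close>] by (metis bij_is_inj inv_f_f)
  then show ?thesis
    using A assms(4) by blast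
qed

context group
begin

lemma wr_carrierD:
  assumes "(f, s) \<in> wr_carrier G n"
  shows "s permutes {1..n}" "\<And>i. i \<notin> {1..n} \<Longrightarrow> f i = \<one>" "\<And>i. f i \<in> carrier G"
proof -
  show "s permutes {1..n}" "\<And>i. i \<notin> {1..n} \<Longrightarrow> f i = \<one>"
    using assms unfolding wr_carrier_def by auto
  fix i
  show "f i \<in> carrier G"
    using assms unfolding wr_carrier_def by (cases "i \<in> {1..n}") auto
qed

lemma cycles_of_type_unique:
  assumes "permutation p" and F: "\<And>i. F i \<in> carrier G"
    and C: "C \<in> conj_classes G" "C' \<in> conj_classes G"
    and Z: "Z \<in> cycles_of_type G F p A C k" "Z \<in> cycles_of_type G F p A' C' k'"
  shows "C = C' \<and> k = k'"
proof -
  obtain j j' where j: "Z = cycle_of p j" "card Z = k" "cycle_prod G F p j k \<in> C"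
    and j': "Z = cycle_of p j'" "card Z = k'" "cycle_prod G F p j' k' \<in> C'"
    using Z unfolding cycles_of_type_def by blast
  have "k' = k"
    using j(2) j'(2) by simp
  have "j' \<in> cycle_of p j"
    using j(1) j'(1) self_in_cycle_of[of j' p] by simp
  moreover have "(p ^^ k) j = j"
    using funpow_fixpoint_iff[OF \<open>permutation p\<close>] j(1,2) by simp
  ultimately have "cycle_prod G F p j' k \<in> C"
    using cycle_prod_in_conj_class[where f=F, OF \<open>permutation p\<close> F] conj_classes_eq[OF C(1) j(3)]
    by simp
  then have "C = C'"
    using conj_classes_eq[OF C(1)] conj_classes_eq[OF C(2) j'(3)] \<open>k' = k\<close> by simp
  with \<open>k' = k\<close> show ?thesis
    by simp
qed

lemma rth_power_type_Diff:
  assumes "permutation p" and F: "\<And>i. F i \<in> carrier G" and "finite A"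
    and type: "rth_power_type G r F p A" and C: "C \<in> conj_classes G"
    and T: "T \<subseteq> cycles_of_type G F p A C k"
    and size: "card T = r \<or> (\<not> r dvd k \<and> class_is_rth_power G r C)"
  shows "rth_power_type G r F p (A - \<Union>T)"
  unfolding rth_power_type_def
proof (intro ballI allI impI)
  fix C' k' assume C': "C' \<in> conj_classes G" and cond: "r dvd k' \<or> \<not> class_is_rth_power G r C'"
  let ?S = "cycles_of_type G F p A C' k'"
  have "\<exists>j. Z = cycle_of p j" if "Z \<in> T" for Z
    using T that unfolding cycles_of_type_def by blast
  then have Diff: "cycles_of_type G F p (A - \<Union>T) C' k' = ?S - T"
    by (rule cycles_of_type_Diff[OF \<open>permutation p\<close>])
  have "r dvd card ?S"
    using type C' cond unfolding rth_power_type_def by blast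
  show "r dvd card (cycles_of_type G F p (A - \<Union>T) C' k')"
  proof (cases "C' = C \<and> k' = k")
    case True
    then have "card T = r" "T \<subseteq> ?S"
      using size cond T by auto
    moreover have "finite ?S"
      by (rule finite_cycles_of_type[OF \<open>finite A\<close>])
    ultimately have "card (?S - T) = card ?S - r"
      by (metis card_Diff_subset finite_subset)
    then show ?thesis
      using Diff \<open>r dvd card ?S\<close> by (simp add: dvd_diff_nat)
  next
    case False
    have "Z \<notin> T" if "Z \<in> ?S" for Z
      using cycles_of_type_unique[OF \<open>permutation p\<close> F C C' _ that] T False by blast
    then have "?S - T = ?S"
      by blast
    then show ?thesis
      using Diff \<open>r dvd card ?S\<close> by simp
  qed
qed

lemma exists_root_on_block:
  assumes "permutation p" and F: "\<And>i. F i \<in> carrier G" and "prime r" and "finite A"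
    and type: "rth_power_type G r F p A" and "j \<in> A"
  obtains T C k f s where "C \<in> conj_classes G" "T \<subseteq> cycles_of_type G F p A C k" "T \<noteq> {}"
    "card T = r \<or> (\<not> r dvd k \<and> class_is_rth_power G r C)" "root_on G r F p (\<Union>T) f s"
proof -
  define k where "k = card (cycle_of p j)"
  define x where "x = cycle_prod G F p j k"
  define C where "C = conj_class G x"
  have x: "x \<in> carrier G"
    unfolding x_def by (rule cycle_prod_closed[OF F])
  have C: "C \<in> conj_classes G"
    unfolding C_def conj_classes_def using x by simp
  have "x \<in> C"
    unfolding C_def by (rule conj_class_self[OF x])
  then have Z: "cycle_of p j \<in> cycles_of_type G F p A C k"
    unfolding cycles_of_type_def x_def k_def using \<open>j \<in> A\<close> by blast
  show ?thesis
  proof (cases "\<not> r dvd k \<and> class_is_rth_power G r C")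
    case True
    then obtain y where y: "y \<in> carrier G" and xy: "x = y [^] r"
      using \<open>x \<in> C\<close> unfolding class_is_rth_power_def by blast
    from xy have root: "cycle_prod G F p j (card (cycle_of p j)) = y [^] r"
      unfolding x_def k_def .
    have "\<not> r dvd card (cycle_of p j)"
      using True unfolding k_def by blast
    then obtain f s where "root_on G r F p (cycle_of p j) f s"
      using root_on_coprime_cycle[where F=F, OF \<open>permutation p\<close> F \<open>prime r\<close> _ y root] by blast
    then show ?thesis
      using that[of C "{cycle_of p j}" k f s] C Z True by simp
  next
    case False
    then have "r dvd card (cycles_of_type G F p A C k)"
      using type C unfolding rth_power_type_def by blast
    moreover have "0 < card (cycles_of_type G F p A C k)"
      using Z finite_cycles_of_type[OF \<open>finite A\<close>] card_gt_0_iff by blast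
    ultimately have "r \<le> card (cycles_of_type G F p A C k)"
      by (rule dvd_imp_le)
    then obtain T where T: "T \<subseteq> cycles_of_type G F p A C k" "card T = r" "finite T"
      by (rule obtain_subset_with_card_n)
    moreover have "\<exists>j. Z = cycle_of p j \<and> card Z = k \<and> cycle_prod G F p j k \<in> conj_class G x"
      if "Z \<in> T" for Z
      using T(1) that unfolding cycles_of_type_def C_def by blast
    ultimately obtain f s where "root_on G r F p (\<Union>T) f s"
      using root_on_cycle_tuple[where F=F and T=T and k=k, OF \<open>permutation p\<close> F
          prime_gt_0_nat[OF \<open>prime r\<close>] x T(3,2)] by blast
    moreover have "T \<noteq> {}"
      using T(2) prime_gt_0_nat[OF \<open>prime r\<close>] by auto
    ultimately show ?thesis
      using that[OF C T(1)] T(2) by blast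
  qed
qed

lemma exists_root_on:
  assumes "permutation p" and F: "\<And>i. F i \<in> carrier G" and "prime r" and "finite A"
    and "\<And>i. i \<in> A \<Longrightarrow> p i \<in> A" and "rth_power_type G r F p A"
  shows "\<exists>f s. root_on G r F p A f s"
  using assms(4-)
proof (induction "card A" arbitrary: A rule: less_induct)
  case less
  show ?case
  proof (cases "A = {}")
    case True
    then have "root_on G r F p A (\<lambda>_. \<one>) id"
      unfolding root_on_def by (simp add: permutes_id)
    then show ?thesis
      by blast
  next
    case False
    then obtain j where "j \<in> A"
      by blast
    obtain T C k f s where C: "C \<in> conj_classes G" and T: "T \<subseteq> cycles_of_type G F p A C k"
      "T \<noteq> {}" "card T = r \<or> (\<not> r dvd k \<and> class_is_rth_power G r C)"
      and root: "root_on G r F p (\<Union>T) f s"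
      by (rule exists_root_on_block[where F=F, OF \<open>permutation p\<close> F \<open>prime r\<close> less.prems(1,3) \<open>j \<in> A\<close>])
    have cycles: "\<exists>j. Z = cycle_of p j" if "Z \<in> T" for Z
      using T(1) that unfolding cycles_of_type_def by blast
    have "\<Union>T \<subseteq> A"
      using T(1) cycle_of_subset[of A p] less.prems(2) unfolding cycles_of_type_def by blast
    moreover have "\<Union>T \<noteq> {}"
      using T(2) cycles self_in_cycle_of by blast
    ultimately have "A - \<Union>T \<subset> A"
      by blast
    then have "card (A - \<Union>T) < card A"
      by (rule psubset_card_mono[OF less.prems(1)])
    moreover have "\<And>i. i \<in> A - \<Union>T \<Longrightarrow> p i \<in> A - \<Union>T"
      using invariant_Diff_cycles[OF \<open>permutation p\<close> less.prems(2) cycles] by blast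
    moreover have "rth_power_type G r F p (A - \<Union>T)"
      by (rule rth_power_type_Diff[where F=F, OF \<open>permutation p\<close> F less.prems(1,3) C T(1,3)])
    ultimately obtain f' s' where "root_on G r F p (A - \<Union>T) f' s'"
      using less.hyps less.prems(1) by blast
    then have "root_on G r F p (\<Union>T \<union> (A - \<Union>T)) (\<lambda>i. if i \<in> \<Union>T then f i else f' i) (s \<circ> s')"
      using root_on_Un[OF root] by blast
    moreover have "\<Union>T \<union> (A - \<Union>T) = A"
      using \<open>\<Union>T \<subseteq> A\<close> by blast
    ultimately show ?thesis
      by auto
  qed
qed

end

theorem proposition4p3:
  fixes G :: "('a, 'b) monoid_scheme" and n r :: nat
    and g :: "(nat \<Rightarrow> 'a) \<times> (nat \<Rightarrow> nat)"
  assumes "group G" and "finite (carrier G)" and "prime r"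
    and "g \<in> wr_carrier G n"
  shows "wr_is_rth_power G n r g \<longleftrightarrow>
    (\<forall>C \<in> conj_classes G. \<forall>j \<in> {1..n}.
        (r dvd j \<or> \<not> class_is_rth_power G r C) \<longrightarrow> r dvd wr_type G n g C j)"
proof -
  interpret group G by fact
  obtain F p where g: "g = (F, p)"
    by fastforce
  have p: "p permutes {1..n}" and F_one: "\<And>i. i \<notin> {1..n} \<Longrightarrow> F i = \<one>\<^bsub>G\<^esub>"
    and F: "\<And>i. F i \<in> carrier G"
    using wr_carrierD assms(4) unfolding g by blast+
  have type: "wr_type G n g C k = card (cycles_of_type G F p {1..n} C k)" for C k
    unfolding g by (rule wr_type_eq_card_cycles_of_type)
  show ?thesis
  proof
    assume "wr_is_rth_power G n r g"
    then obtain f s where h: "(f, s) \<in> wr_carrier G n" "wr_pow G (f, s) r = g"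
      unfolding wr_is_rth_power_def by auto
    have s: "s permutes {1..n}" and f: "\<And>i. f i \<in> carrier G"
      using wr_carrierD(1,3)[OF h(1)] by blast+
    have "(\<lambda>i. cycle_prod G f s i r, s ^^ r) = (F, p)"
      using h(2) wr_pow_eq[OF permutes_bij[OF s], of G f r] unfolding g by simp
    then show "\<forall>C \<in> conj_classes G. \<forall>j \<in> {1..n}.
        (r dvd j \<or> \<not> class_is_rth_power G r C) \<longrightarrow> r dvd wr_type G n g C j"
      using dvd_card_cycles_of_type_rth_power[where f=f, OF s _ \<open>prime r\<close> f] type by simp
  next
    assume "\<forall>C \<in> conj_classes G. \<forall>j \<in> {1..n}.
        (r dvd j \<or> \<not> class_is_rth_power G r C) \<longrightarrow> r dvd wr_type G n g C j"
    then have "r dvd card (cycles_of_type G F p {1..n} C k)"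
      if "C \<in> conj_classes G" "r dvd k \<or> \<not> class_is_rth_power G r C" for C k
    proof (cases "k \<in> {1..n}")
      case False
      then have "cycles_of_type G F p {1..n} C k = {}"
        by (intro cycles_of_type_empty[OF p]) simp_all
      then show ?thesis
        by simp
    qed (use that type in auto)
    then have "rth_power_type G r F p {1..n}"
      unfolding rth_power_type_def by blast
    moreover have "permutation p"
      using p finite_atLeastAtMost permutation_permutes by blast
    ultimately obtain f s where "root_on G r F p {1..n} f s"
      using exists_root_on[where F=F, OF _ F \<open>prime r\<close> finite_atLeastAtMost] permutes_in_image[OF p] by blast
    then show "wr_is_rth_power G n r g"
      unfolding g using wr_is_rth_power_if_root_on[where F=F, OF \<open>group G\<close> p F_one] by blast
  qed
qed

end
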